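(* Let $\varepsilon_1,\varepsilon_2>0$ and $\varepsilon=\varepsilon_1+\varepsilon_2$. For a dataset $D=\{(x_i,y_i)\}_{i=1}^n$ with $x_i,y_i\in[0,1]$, let $S_{x^2}=\sum_i x_i^2$, $S_{x-x^2}=\sum_i (x_i-x_i^2)$, $S_{1-x}=\sum_i(1-x_i)$, $S_{xy}=\sum_i x_iy_i$, $S_{(1-x)y}=\sum_i (1-x_i)y_i$, $S_{1-y}=\sum_i(1-y_i)$. Let $Z_{11},Z_{12},Z_{13}$ be i.i.d. $\mathrm{Lap}(1/\varepsilon_1)$, let $Z_{21},Z_{22},Z_{23}$ be i.i.d. $\mathrm{Lap}(1/\varepsilon_2)$, with the two groups independent of each other. Then the mechanism releasing $\mathcal{M}(D)=\bigl(S_{x^2}+Z_{11},\,S_{x-x^2}+Z_{12},\,S_{1-x}+Z_{13},\,S_{xy}+Z_{21},\,S_{(1-x)y}+Z_{22},\,S_{1-y}+Z_{23}\bigr)$ satisfies $\varepsilon$-differential privacy.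
   Context: $\mathrm{Lap}(b)$ denotes the zero-mean Laplace distribution with density $\frac{1}{2b}e^{-|z|/b}$. Two datasets are neighboring ($D\sim D'$) if one is obtained from the other by adding or removing a single record in $[0,1]^2$. A randomized mechanism $\mathcal{M}$ satisfies $\varepsilon$-differential privacy (pure DP) if for all neighboring $D\sim D'$ and all measurable sets $S$ of outputs, $\Pr[\mathcal{M}(D)\in S]\le e^{\varepsilon}\Pr[\mathcal{M}(D')\in S]$. *)

theory Defs
  imports "HOL-Probability.Probability"
begin

type_synonym datum = "real \<times> real"
type_synonym dataset = "datum list"
type_synonym output6 = "real \<times> real \<times> real \<times> real \<times> real \<times> real"

definition laplace_density :: "real \<Rightarrow> real \<Rightarrow> real" where
  "laplace_density b z = exp (- \<bar>z\<bar> / b) / (2 * b)"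

definition laplace :: "real \<Rightarrow> real measure" where
  "laplace b = density lborel (\<lambda>z. ennreal (laplace_density b z))"

definition valid_record :: "datum \<Rightarrow> bool" where
  "valid_record r \<longleftrightarrow> fst r \<in> {0..1} \<and> snd r \<in> {0..1}"

definition valid_dataset :: "dataset \<Rightarrow> bool" where
  "valid_dataset D \<longleftrightarrow> (\<forall>r\<in>set D. valid_record r)"

definition neighbors :: "dataset \<Rightarrow> dataset \<Rightarrow> bool" where
  "neighbors D D' \<longleftrightarrow>
     (\<exists>xs ys r. D' = xs @ r # ys \<and> D = xs @ ys) \<or>
     (\<exists>xs ys r. D = xs @ r # ys \<and> D' = xs @ ys)"

definition S_x2 :: "dataset \<Rightarrow> real" where
  "S_x2 D = (\<Sum>(x,y)\<leftarrow>D. x\<^sup>2)"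
definition S_x_x2 :: "dataset \<Rightarrow> real" where
  "S_x_x2 D = (\<Sum>(x,y)\<leftarrow>D. x - x\<^sup>2)"
definition S_1_x :: "dataset \<Rightarrow> real" where
  "S_1_x D = (\<Sum>(x,y)\<leftarrow>D. 1 - x)"
definition S_xy :: "dataset \<Rightarrow> real" where
  "S_xy D = (\<Sum>(x,y)\<leftarrow>D. x * y)"
definition S_1_x_y :: "dataset \<Rightarrow> real" where
  "S_1_x_y D = (\<Sum>(x,y)\<leftarrow>D. (1 - x) * y)"
definition S_1_y :: "dataset \<Rightarrow> real" where
  "S_1_y D = (\<Sum>(x,y)\<leftarrow>D. 1 - y)"

definition noise :: "real \<Rightarrow> real \<Rightarrow> output6 measure" where
  "noise e1 e2 = laplace (1/e1) \<Otimes>\<^sub>M laplace (1/e1) \<Otimes>\<^sub>M laplace (1/e1) \<Otimes>\<^sub>M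
                 laplace (1/e2) \<Otimes>\<^sub>M laplace (1/e2) \<Otimes>\<^sub>M laplace (1/e2)"

definition mech :: "real \<Rightarrow> real \<Rightarrow> dataset \<Rightarrow> output6 measure" where
  "mech e1 e2 D = distr (noise e1 e2) borel
     (\<lambda>(z11, z12, z13, z21, z22, z23).
        (S_x2 D + z11, S_x_x2 D + z12, S_1_x D + z13,
         S_xy D + z21, S_1_x_y D + z22, S_1_y D + z23))"

definition pure_dp :: "real \<Rightarrow> (dataset \<Rightarrow> output6 measure) \<Rightarrow> bool" where
  "pure_dp \<epsilon> M \<longleftrightarrow>
     (\<forall>D D'. valid_dataset D \<and> valid_dataset D' \<and> neighbors D D' \<longrightarrow>
        (\<forall>S \<in> sets (borel :: output6 measure).
           measure (M D) S \<le> exp \<epsilon> * measure (M D') S))"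

end

theory Submission
  imports Defs
begin

text \<open>
  The released vector is the vector of six statistics shifted by independent Laplace noise, so its
  law is a product of six translated Laplace laws. The densities of a Laplace law translated by
  a and by a' differ at most by the factor exp (\<bar>a - a'\<bar> / b) (triangle inequality), and such
  bounds on density ratios multiply under products. Hence the laws for D and D' differ at most by
  the factor exp (\<epsilon>1 \<Delta>1 + \<epsilon>2 \<Delta>2), where \<Delta>1, \<Delta>2 are the l1-distances of the two triples of
  statistics. A record (x, y) contributes to the first triple the nonnegative terms x^2, x - x^2,
  1 - x, whose sum is 1, and to the second triple x y, (1 - x) y, 1 - y, whose sum is also 1;
  so \<Delta>1 = \<Delta>2 = 1 for neighbouring datasets.
\<close>

lemma borel_measurable_laplace_density [measurable]: "laplace_density b \<in> borel_measurable borel"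
  unfolding laplace_density_def by measurable

lemma sets_laplace [measurable_cong, simp]: "sets (laplace b) = sets borel"
  by (simp add: laplace_def)

lemma laplace_density_le_exponential:
  assumes "b > 0"
  shows "laplace_density b z \<le> exponential_density (1/b) z + exponential_density (1/b) (- z)"
  using assms by (cases "z < 0") (auto simp: laplace_density_def exponential_density_def divide_simps)

lemma finite_measure_laplace:
  assumes b: "b > 0"
  shows "finite_measure (laplace b)"
proof -
  let ?ed = "exponential_density (1/b)"
  interpret prob_space "density lborel ?ed"
    using b by (intro prob_space_exponential_density) simp
  have ed: "(\<integral>\<^sup>+z. ennreal (?ed z) \<partial>lborel) = 1"
    using emeasure_space_1 by (simp add: emeasure_density)
  have ed_reflected: "(\<integral>\<^sup>+z. ennreal (?ed (- z)) \<partial>lborel) = 1"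
    using nn_integral_real_affine[of "\<lambda>z. ennreal (?ed z)" "-1" 0] ed by simp
  have "(\<integral>\<^sup>+z. ennreal (laplace_density b z) \<partial>lborel)
      \<le> (\<integral>\<^sup>+z. ennreal (?ed z) + ennreal (?ed (- z)) \<partial>lborel)"
    using b laplace_density_le_exponential[OF b]
    by (intro nn_integral_mono) (simp add: ennreal_plus[symmetric] del: ennreal_plus)
  also have "\<dots> = 2"
    by (subst nn_integral_add) (auto simp: ed ed_reflected)
  finally show ?thesis
    unfolding laplace_def by (intro finite_measureI) (auto simp: emeasure_density top_unique)
qed

definition laplace_at :: "real \<Rightarrow> real \<Rightarrow> real measure" where
  "laplace_at b a = distr (laplace b) borel ((+) a)"

lemma laplace_at_density: "laplace_at b a = density lborel (\<lambda>z. ennreal (laplace_density b (z - a)))"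
proof -
  have "density (distr lborel borel ((+) a)) (\<lambda>z. ennreal (laplace_density b (z - a)))
      = distr (density lborel (\<lambda>z. ennreal (laplace_density b (a + z - a)))) borel ((+) a)"
    by (rule density_distr) auto
  then show ?thesis
    by (simp add: laplace_at_def laplace_def lborel_distr_plus)
qed

lemma finite_measure_laplace_at: "b > 0 \<Longrightarrow> finite_measure (laplace_at b a)"
  unfolding laplace_at_def
  by (rule finite_measure.finite_measure_distr[OF finite_measure_laplace]) auto

lemma laplace_density_shift_le:
  assumes b: "b > 0"
  shows "laplace_density b (z - a) \<le> exp (\<bar>a - a'\<bar> / b) * laplace_density b (z - a')"
proof -
  have "\<bar>z - a'\<bar> \<le> \<bar>z - a\<bar> + \<bar>a - a'\<bar>"
    by simp
  then have "- \<bar>z - a\<bar> / b \<le> \<bar>a - a'\<bar> / b + - \<bar>z - a'\<bar> / b"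
    using b by (simp add: divide_simps)
  then have "exp (- \<bar>z - a\<bar> / b) \<le> exp (\<bar>a - a'\<bar> / b) * exp (- \<bar>z - a'\<bar> / b)"
    by (simp add: exp_add[symmetric])
  then show ?thesis
    using b by (simp add: laplace_density_def divide_simps)
qed

text \<open>The sigma-finiteness conditions make the notion stable under products.\<close>

definition log_density_ratio_le :: "'a measure \<Rightarrow> real \<Rightarrow> 'a measure \<Rightarrow> 'a measure \<Rightarrow> bool" where
  "log_density_ratio_le B r M N \<longleftrightarrow>
     sigma_finite_measure B \<and> sigma_finite_measure M \<and> sigma_finite_measure N \<and>
     (\<exists>f g. f \<in> borel_measurable B \<and> g \<in> borel_measurable B \<and>
        M = density B f \<and> N = density B g \<and> (\<forall>x\<in>space B. f x \<le> ennreal (exp r) * g x))"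

lemma log_density_ratio_le_emeasure_le:
  assumes "log_density_ratio_le B r M N" "A \<in> sets M"
  shows "emeasure M A \<le> ennreal (exp r) * emeasure N A"
proof -
  from assms(1) obtain f g where [measurable]: "f \<in> borel_measurable B" "g \<in> borel_measurable B"
    and M: "M = density B f" and N: "N = density B g"
    and le: "\<forall>x\<in>space B. f x \<le> ennreal (exp r) * g x"
    unfolding log_density_ratio_le_def by blast
  have [measurable]: "A \<in> sets B"
    using assms(2) M by simp
  have "emeasure M A = (\<integral>\<^sup>+x. f x * indicator A x \<partial>B)"
    unfolding M by (rule emeasure_density) auto
  also have "\<dots> \<le> (\<integral>\<^sup>+x. ennreal (exp r) * (g x * indicator A x) \<partial>B)"
    using le by (intro nn_integral_mono) (auto simp: indicator_def)
  also have "\<dots> = ennreal (exp r) * emeasure N A"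
    unfolding N by (subst nn_integral_cmult) (auto simp: emeasure_density)
  finally show ?thesis .
qed

lemma log_density_ratio_le_measure_le:
  assumes "log_density_ratio_le B r M N" "finite_measure N" "A \<in> sets M"
  shows "measure M A \<le> exp r * measure N A"
proof -
  interpret N: finite_measure N by fact
  have "emeasure M A \<le> ennreal (exp r * measure N A)"
    using log_density_ratio_le_emeasure_le[OF assms(1,3)]
    by (simp add: N.emeasure_eq_measure ennreal_mult)
  then show ?thesis
    by (simp add: measure_def enn2real_leI)
qed

lemma log_density_ratio_le_mono:
  assumes "log_density_ratio_le B r M N" "r \<le> r'"
  shows "log_density_ratio_le B r' M N"
proof -
  from assms(1) obtain f g where "f \<in> borel_measurable B" "g \<in> borel_measurable B"
    and "M = density B f" "N = density B g" and le: "\<forall>x\<in>space B. f x \<le> ennreal (exp r) * g x"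
    and "sigma_finite_measure B" "sigma_finite_measure M" "sigma_finite_measure N"
    unfolding log_density_ratio_le_def by blast
  moreover have "\<forall>x\<in>space B. f x \<le> ennreal (exp r') * g x"
    using le assms(2) by (meson ennreal_leI exp_le_cancel_iff mult_right_mono order_trans zero_le)
  ultimately show ?thesis
    unfolding log_density_ratio_le_def by blast
qed

lemma log_density_ratio_le_pair:
  assumes "log_density_ratio_le B1 r1 M1 N1" "log_density_ratio_le B2 r2 M2 N2"
  shows "log_density_ratio_le (B1 \<Otimes>\<^sub>M B2) (r1 + r2) (M1 \<Otimes>\<^sub>M M2) (N1 \<Otimes>\<^sub>M N2)"
proof -
  from assms(1) obtain f1 g1 where [measurable]: "f1 \<in> borel_measurable B1" "g1 \<in> borel_measurable B1"
    and M1: "M1 = density B1 f1" and N1: "N1 = density B1 g1"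
    and le1: "\<forall>x\<in>space B1. f1 x \<le> ennreal (exp r1) * g1 x"
    and sf1: "sigma_finite_measure B1" "sigma_finite_measure M1" "sigma_finite_measure N1"
    unfolding log_density_ratio_le_def by blast
  from assms(2) obtain f2 g2 where [measurable]: "f2 \<in> borel_measurable B2" "g2 \<in> borel_measurable B2"
    and M2: "M2 = density B2 f2" and N2: "N2 = density B2 g2"
    and le2: "\<forall>x\<in>space B2. f2 x \<le> ennreal (exp r2) * g2 x"
    and sf2: "sigma_finite_measure B2" "sigma_finite_measure M2" "sigma_finite_measure N2"
    unfolding log_density_ratio_le_def by blast
  have "M1 \<Otimes>\<^sub>M M2 = density (B1 \<Otimes>\<^sub>M B2) (\<lambda>(x, y). f1 x * f2 y)"
    unfolding M1 M2 using sf2 M2 by (intro pair_measure_density) auto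
  moreover have "N1 \<Otimes>\<^sub>M N2 = density (B1 \<Otimes>\<^sub>M B2) (\<lambda>(x, y). g1 x * g2 y)"
    unfolding N1 N2 using sf2 N2 by (intro pair_measure_density) auto
  moreover have "f1 x * f2 y \<le> ennreal (exp (r1 + r2)) * (g1 x * g2 y)"
    if "x \<in> space B1" "y \<in> space B2" for x y
  proof -
    have "f1 x * f2 y \<le> (ennreal (exp r1) * g1 x) * (ennreal (exp r2) * g2 y)"
      using le1 le2 that by (intro mult_mono) auto
    then show ?thesis
      by (simp add: exp_add ennreal_mult ac_simps)
  qed
  ultimately show ?thesis
    using sf1 sf2 unfolding log_density_ratio_le_def
    by (intro conjI exI[of _ "\<lambda>(x, y). f1 x * f2 y"] exI[of _ "\<lambda>(x, y). g1 x * g2 y"]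
        sigma_finite_pair_measure) (auto simp: space_pair_measure)
qed

lemma log_density_ratio_le_laplace_at:
  assumes e: "e > 0"
  shows "log_density_ratio_le lborel (e * \<bar>a - a'\<bar>) (laplace_at (1/e) a) (laplace_at (1/e) a')"
proof -
  have b: "1/e > 0"
    using e by simp
  have "ennreal (laplace_density (1/e) (z - a))
      \<le> ennreal (exp (e * \<bar>a - a'\<bar>)) * ennreal (laplace_density (1/e) (z - a'))" for z
    using laplace_density_shift_le[OF b, of z a a'] e
    by (simp add: ennreal_mult[symmetric] laplace_density_def mult.commute del: ennreal_mult')
  then show ?thesis
    using finite_measure_laplace_at[OF b] unfolding log_density_ratio_le_def laplace_at_density
    by (intro conjI exI[of _ "\<lambda>z. ennreal (laplace_density (1/e) (z - a))"]
        exI[of _ "\<lambda>z. ennreal (laplace_density (1/e) (z - a'))"]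
        lborel.sigma_finite_measure_axioms finite_measure.sigma_finite_measure) auto
qed

lemma sets_pair_borel:
  assumes "sets M = sets (borel :: 'a::second_countable_topology measure)"
    and "sets N = sets (borel :: 'b::second_countable_topology measure)"
  shows "sets (M \<Otimes>\<^sub>M N) = sets (borel :: ('a \<times> 'b) measure)"
  using sets_pair_measure_cong[OF assms] unfolding borel_prod .

lemma distr_translate_pair:
  fixes a :: "'a::{second_countable_topology, real_normed_vector}"
    and b :: "'b::{second_countable_topology, real_normed_vector}"
  assumes sets_M: "sets M = sets borel" and sets_N: "sets N = sets borel" and "finite_measure N"
  shows "distr (M \<Otimes>\<^sub>M N) borel ((+) (a, b)) = distr M borel ((+) a) \<Otimes>\<^sub>M distr N borel ((+) b)"
proof -
  have [measurable]: "(+) a \<in> M \<rightarrow>\<^sub>M borel" "(+) b \<in> N \<rightarrow>\<^sub>M borel"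
    by (simp_all add: measurable_cong_sets[OF sets_M refl] measurable_cong_sets[OF sets_N refl])
  have "distr M borel ((+) a) \<Otimes>\<^sub>M distr N borel ((+) b)
      = distr (M \<Otimes>\<^sub>M N) (borel \<Otimes>\<^sub>M borel) (\<lambda>(x, y). (a + x, b + y))"
    using assms by (intro pair_measure_distr finite_measure.sigma_finite_measure
        finite_measure.finite_measure_distr) auto
  then show ?thesis
    by (simp add: borel_prod case_prod_beta' plus_prod_def[abs_def])
qed

lemma mech_eq_laplace_at:
  assumes "e1 > 0" "e2 > 0"
  shows "mech e1 e2 D =
    laplace_at (1/e1) (S_x2 D) \<Otimes>\<^sub>M laplace_at (1/e1) (S_x_x2 D) \<Otimes>\<^sub>M laplace_at (1/e1) (S_1_x D) \<Otimes>\<^sub>M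
    laplace_at (1/e2) (S_xy D) \<Otimes>\<^sub>M laplace_at (1/e2) (S_1_x_y D) \<Otimes>\<^sub>M laplace_at (1/e2) (S_1_y D)"
proof -
  have "mech e1 e2 D = distr (noise e1 e2) borel
      ((+) (S_x2 D, S_x_x2 D, S_1_x D, S_xy D, S_1_x_y D, S_1_y D))"
    unfolding mech_def by (intro arg_cong[where f = "distr _ _"]) (auto simp: fun_eq_iff)
  then show ?thesis
    using assms unfolding noise_def laplace_at_def
    by (simp add: distr_translate_pair sets_pair_borel finite_measure_pair_measure
        finite_measure_laplace)
qed

lemma finite_measure_mech: "e1 > 0 \<Longrightarrow> e2 > 0 \<Longrightarrow> finite_measure (mech e1 e2 D)"
  unfolding mech_eq_laplace_at by (intro finite_measure_pair_measure finite_measure_laplace_at) auto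

definition x_stats_dist :: "dataset \<Rightarrow> dataset \<Rightarrow> real" where
  "x_stats_dist D D' = \<bar>S_x2 D - S_x2 D'\<bar> + \<bar>S_x_x2 D - S_x_x2 D'\<bar> + \<bar>S_1_x D - S_1_x D'\<bar>"

definition xy_stats_dist :: "dataset \<Rightarrow> dataset \<Rightarrow> real" where
  "xy_stats_dist D D' = \<bar>S_xy D - S_xy D'\<bar> + \<bar>S_1_x_y D - S_1_x_y D'\<bar> + \<bar>S_1_y D - S_1_y D'\<bar>"

lemma log_density_ratio_le_mech:
  assumes "e1 > 0" "e2 > 0"
  shows "log_density_ratio_le (lborel \<Otimes>\<^sub>M lborel \<Otimes>\<^sub>M lborel \<Otimes>\<^sub>M lborel \<Otimes>\<^sub>M lborel \<Otimes>\<^sub>M lborel)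
    (e1 * x_stats_dist D D' + e2 * xy_stats_dist D D') (mech e1 e2 D) (mech e1 e2 D')"
proof -
  \<comment> \<open>bracketed like the product measure, so that the product rule applies factor by factor\<close>
  have "e1 * x_stats_dist D D' + e2 * xy_stats_dist D D' =
    e1 * \<bar>S_x2 D - S_x2 D'\<bar> + (e1 * \<bar>S_x_x2 D - S_x_x2 D'\<bar> + (e1 * \<bar>S_1_x D - S_1_x D'\<bar> +
    (e2 * \<bar>S_xy D - S_xy D'\<bar> + (e2 * \<bar>S_1_x_y D - S_1_x_y D'\<bar> + e2 * \<bar>S_1_y D - S_1_y D'\<bar>))))"
    by (simp add: x_stats_dist_def xy_stats_dist_def algebra_simps)
  then show ?thesis
    unfolding mech_eq_laplace_at[OF assms]
    by (simp only:) (intro log_density_ratio_le_pair log_density_ratio_le_laplace_at assms)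
qed

lemma stats_dist_remove_record:
  assumes "valid_record r"
  shows "x_stats_dist (xs @ r # ys) (xs @ ys) = 1" and "xy_stats_dist (xs @ r # ys) (xs @ ys) = 1"
proof -
  obtain x y where r: "r = (x, y)"
    by (cases r)
  have x: "0 \<le> x" "x \<le> 1" and y: "0 \<le> y" "y \<le> 1"
    using assms r by (auto simp: valid_record_def)
  have "x * x \<le> x" "x * y \<le> y"
    using x y by (simp_all add: mult_left_le mult_left_le_one_le)
  then show "x_stats_dist (xs @ r # ys) (xs @ ys) = 1" "xy_stats_dist (xs @ r # ys) (xs @ ys) = 1"
    using x y by (simp_all add: x_stats_dist_def xy_stats_dist_def S_x2_def S_x_x2_def S_1_x_def
        S_xy_def S_1_x_y_def S_1_y_def r power2_eq_square algebra_simps)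
qed

lemma stats_dist_commute:
  "x_stats_dist D D' = x_stats_dist D' D" "xy_stats_dist D D' = xy_stats_dist D' D"
  by (simp_all add: x_stats_dist_def xy_stats_dist_def abs_minus_commute)

lemma neighbors_stats_dist:
  assumes "valid_dataset D" "valid_dataset D'" "neighbors D D'"
  shows "x_stats_dist D D' = 1 \<and> xy_stats_dist D D' = 1"
  using assms unfolding neighbors_def valid_dataset_def
proof (elim conjE disjE exE)
  fix xs ys r
  assume "D' = xs @ r # ys" "D = xs @ ys" "\<forall>r\<in>set D'. valid_record r"
  then show ?thesis
    using stats_dist_remove_record[of r xs ys] by (simp add: stats_dist_commute)
next
  fix xs ys r
  assume "D = xs @ r # ys" "D' = xs @ ys" "\<forall>r\<in>set D. valid_record r"
  then show ?thesis
    using stats_dist_remove_record[of r xs ys] by simp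
qed

theorem mainTheorem5:
  fixes \<epsilon>1 \<epsilon>2 \<epsilon> :: real
  assumes "\<epsilon>1 > 0" and "\<epsilon>2 > 0" and "\<epsilon> = \<epsilon>1 + \<epsilon>2"
  shows "pure_dp \<epsilon> (mech \<epsilon>1 \<epsilon>2)"
  unfolding pure_dp_def
proof (intro allI impI ballI)
  fix D D' and S :: "output6 set"
  assume "valid_dataset D \<and> valid_dataset D' \<and> neighbors D D'" and S: "S \<in> sets borel"
  then have "x_stats_dist D D' = 1" "xy_stats_dist D D' = 1"
    using neighbors_stats_dist by blast+
  then have "log_density_ratio_le (lborel \<Otimes>\<^sub>M lborel \<Otimes>\<^sub>M lborel \<Otimes>\<^sub>M lborel \<Otimes>\<^sub>M lborel \<Otimes>\<^sub>M lborel)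
      \<epsilon> (mech \<epsilon>1 \<epsilon>2 D) (mech \<epsilon>1 \<epsilon>2 D')"
    using log_density_ratio_le_mech[OF assms(1,2), of D D'] assms(3) by simp
  then show "measure (mech \<epsilon>1 \<epsilon>2 D) S \<le> exp \<epsilon> * measure (mech \<epsilon>1 \<epsilon>2 D') S"
    using S assms by (intro log_density_ratio_le_measure_le finite_measure_mech) (auto simp: mech_def)
qed

end
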